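(* Let $\alpha:U\to V$ be a surjective transmission between commutative supertropical monoids, $M:=eU$, $N:=eV$, and $\gamma:=\alpha^\nu:M\to N$. (i) There exists a factorization $\alpha=\mu\circ\beta\circ\lambda$ with $\lambda$ an ideal compression of $U$, $\beta$ a strict ghost contraction, and $\mu$ a tangible fiber contraction over $N$. (ii) The factorization is essentially unique: if $\alpha=\mu'\circ\beta'\circ\lambda'$ is a second such factorization, then there exist isomorphisms of supertropical monoids $\rho$ over $M$ and $\sigma$ over $N$ such that $\lambda'=\rho\lambda$, $\mu'=\mu\sigma^{-1}$, $\beta'=\sigma\beta\rho^{-1}$. (iii) In particular one can choose $\lambda=\pi_{E(U,\mathfrak A)}:U\to\bar U:=U/E(U,\mathfrak A)$ with $\mathfrak A:=\mathfrak A_\alpha$ the ghost kernel of $\alpha$, $\beta=\pi_{F(\bar U,\gamma)}:\bar U\to W:=\bar U/F(\bar U,\gamma)$, and $\mu:W\to V$ the resulting tangible fiber contraction over $N$ with $\alpha=\mu\beta\lambda$.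
   Context: All monoids are commutative. A supertropical monoid is a monoid $(U,\cdot)$ with absorbing element $0$ and distinguished idempotent $e$ with $ex=0\Rightarrow x=0$, together with a total ordering on $M:=eU$, compatible with multiplication and with $0$ least, making $M$ a bipotent semiring (addition $=\max$). Tangible elements: $\mathcal T(U):=U\setminus eU$. A transmission $\alpha:U\to V$ is a map with $\alpha(0)=0$, $\alpha(1)=1$, $\alpha(xy)=\alpha(x)\alpha(y)$, $\alpha(e_U)=e_V$, and order-preserving on $eU$; its ghost part $\alpha^\nu:eU\to eV$ is its restriction; ghost kernel $\mathfrak A_\alpha:=\{x:\alpha(x)\in eV\}$, zero kernel $\mathfrak z_\alpha:=\alpha^{-1}(0)$. An isomorphism over $M$ is an isomorphism whose ghost part is the identity of $M$. A fiber contraction is a surjective transmission whose ghost part is an isomorphism; it is "over $M$" if $eV=eU=M$ and the ghost part is $\mathrm{id}_M$. An ideal compression is a fiber contraction over $M$ mapping $U\setminus\mathfrak A_\alpha$ bijectively onto $V\setminus N=\mathcal T(V)$. A transmission is tangible if $\alpha(\mathcal T(U))\subset\mathcal T(V)\cup\{0\}$. A ghost contraction is a transmission $\alpha$ whose ghost part maps $M$ onto $N$ and which maps $U\setminus(M\cup\mathfrak z_\alpha)$ bijectively onto $\mathcal T(V)$; it is strict if $\alpha^{-1}(0)\subset M$. For an equivalence relation $E$ on $U$ that is a TE-relation (multiplicative, order compatible on $M$, and $ex\sim_E0\Rightarrow x\sim_E0$), $U/E$ carries the unique supertropical monoid structure making $\pi_E:x\mapsto[x]_E$ a transmission. For an ideal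 $\mathfrak A\supseteq M$ of $U$, $E(U,\mathfrak A)$ is the TE-relation: $x\sim y$ iff $x=y$, or $x,y\in\mathfrak A$ and $ex=ey$; the ghost ideal of $U/E(U,\mathfrak A)$ is identified with $M$. For a surjective semiring homomorphism $\gamma:M\to N$, $F(U,\gamma)$ is the TE-relation: $x\sim y$ iff $x=y$, or $x,y\in M$ with $\gamma(x)=\gamma(y)$, or $\gamma(ex)=\gamma(ey)=0$; the ghost ideal of $U/F(U,\gamma)$ is identified with $N$. *)

theory Defs
  imports Main
begin

record 'a stm =
  st_carrier :: "'a set"
  st_mult :: "'a \<Rightarrow> 'a \<Rightarrow> 'a"
  st_zero :: 'a
  st_one :: 'a
  st_e :: 'a
  st_le :: "'a \<Rightarrow> 'a \<Rightarrow> bool"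

definition ghosts :: "('a, 'm) stm_scheme \<Rightarrow> 'a set" where
  "ghosts U = (\<lambda>x. st_mult U (st_e U) x) ` st_carrier U"

definition tangibles :: "('a, 'm) stm_scheme \<Rightarrow> 'a set" where
  "tangibles U = st_carrier U - ghosts U"

definition supertropical_monoid :: "('a, 'm) stm_scheme \<Rightarrow> bool" where
  "supertropical_monoid U \<longleftrightarrow>
     (\<forall>x\<in>st_carrier U. \<forall>y\<in>st_carrier U. st_mult U x y \<in> st_carrier U) \<and>
     (\<forall>x\<in>st_carrier U. \<forall>y\<in>st_carrier U. \<forall>z\<in>st_carrier U.
        st_mult U (st_mult U x y) z = st_mult U x (st_mult U y z)) \<and>
     (\<forall>x\<in>st_carrier U. \<forall>y\<in>st_carrier U. st_mult U x y = st_mult U y x) \<and>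
     st_one U \<in> st_carrier U \<and> (\<forall>x\<in>st_carrier U. st_mult U (st_one U) x = x) \<and>
     st_zero U \<in> st_carrier U \<and> (\<forall>x\<in>st_carrier U. st_mult U (st_zero U) x = st_zero U) \<and>
     st_e U \<in> st_carrier U \<and> st_mult U (st_e U) (st_e U) = st_e U \<and>
     (\<forall>x\<in>st_carrier U. st_mult U (st_e U) x = st_zero U \<longrightarrow> x = st_zero U) \<and>
     \<comment> \<open>total ordering on M = eU\<close>
     (\<forall>x\<in>ghosts U. st_le U x x) \<and>
     (\<forall>x\<in>ghosts U. \<forall>y\<in>ghosts U. st_le U x y \<and> st_le U y x \<longrightarrow> x = y) \<and>
     (\<forall>x\<in>ghosts U. \<forall>y\<in>ghosts U. \<forall>z\<in>ghosts U. st_le U x y \<and> st_le U y z \<longrightarrow> st_le U x z) \<and>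
     (\<forall>x\<in>ghosts U. \<forall>y\<in>ghosts U. st_le U x y \<or> st_le U y x) \<and>
     \<comment> \<open>compatible with multiplication (so M is a bipotent semiring with + = max)\<close>
     (\<forall>x\<in>ghosts U. \<forall>y\<in>ghosts U. \<forall>z\<in>ghosts U.
        st_le U x y \<longrightarrow> st_le U (st_mult U x z) (st_mult U y z)) \<and>
     \<comment> \<open>0 is least\<close>
     (\<forall>x\<in>ghosts U. st_le U (st_zero U) x)"

definition transmission :: "('a, 'm) stm_scheme \<Rightarrow> ('b, 'n) stm_scheme \<Rightarrow> ('a \<Rightarrow> 'b) \<Rightarrow> bool" where
  "transmission U V f \<longleftrightarrow>
     f ` st_carrier U \<subseteq> st_carrier V \<and>
     f (st_zero U) = st_zero V \<and> f (st_one U) = st_one V \<and>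
     (\<forall>x\<in>st_carrier U. \<forall>y\<in>st_carrier U. f (st_mult U x y) = st_mult V (f x) (f y)) \<and>
     f (st_e U) = st_e V \<and>
     (\<forall>x\<in>ghosts U. \<forall>y\<in>ghosts U. st_le U x y \<longrightarrow> st_le V (f x) (f y))"

definition ghost_kernel :: "('a, 'm) stm_scheme \<Rightarrow> ('b, 'n) stm_scheme \<Rightarrow> ('a \<Rightarrow> 'b) \<Rightarrow> 'a set" where
  "ghost_kernel U V f = {x\<in>st_carrier U. f x \<in> ghosts V}"

definition zero_kernel :: "('a, 'm) stm_scheme \<Rightarrow> ('b, 'n) stm_scheme \<Rightarrow> ('a \<Rightarrow> 'b) \<Rightarrow> 'a set" where
  "zero_kernel U V f = {x\<in>st_carrier U. f x = st_zero V}"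

definition stm_iso :: "('a, 'm) stm_scheme \<Rightarrow> ('b, 'n) stm_scheme \<Rightarrow> ('a \<Rightarrow> 'b) \<Rightarrow> bool" where
  "stm_iso U V f \<longleftrightarrow> transmission U V f \<and> bij_betw f (st_carrier U) (st_carrier V) \<and>
     transmission V U (inv_into (st_carrier U) f)"

definition fiber_contraction :: "('a, 'm) stm_scheme \<Rightarrow> ('b, 'n) stm_scheme \<Rightarrow> ('a \<Rightarrow> 'b) \<Rightarrow> bool" where
  "fiber_contraction U V f \<longleftrightarrow> transmission U V f \<and> f ` st_carrier U = st_carrier V \<and>
     bij_betw f (ghosts U) (ghosts V) \<and>
     (\<forall>x\<in>ghosts U. \<forall>y\<in>ghosts U. st_le V (f x) (f y) \<longrightarrow> st_le U x y)"

definition ideal_compression :: "('a, 'm) stm_scheme \<Rightarrow> ('b, 'n) stm_scheme \<Rightarrow> ('a \<Rightarrow> 'b) \<Rightarrow> bool" where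
  "ideal_compression U V f \<longleftrightarrow> fiber_contraction U V f \<and>
     bij_betw f (st_carrier U - ghost_kernel U V f) (tangibles V)"

definition tangible_transmission :: "('a, 'm) stm_scheme \<Rightarrow> ('b, 'n) stm_scheme \<Rightarrow> ('a \<Rightarrow> 'b) \<Rightarrow> bool" where
  "tangible_transmission U V f \<longleftrightarrow> transmission U V f \<and>
     f ` tangibles U \<subseteq> tangibles V \<union> {st_zero V}"

definition ghost_contraction :: "('a, 'm) stm_scheme \<Rightarrow> ('b, 'n) stm_scheme \<Rightarrow> ('a \<Rightarrow> 'b) \<Rightarrow> bool" where
  "ghost_contraction U V f \<longleftrightarrow> transmission U V f \<and> f ` ghosts U = ghosts V \<and>
     bij_betw f (st_carrier U - (ghosts U \<union> zero_kernel U V f)) (tangibles V)"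

definition strict_ghost_contraction :: "('a, 'm) stm_scheme \<Rightarrow> ('b, 'n) stm_scheme \<Rightarrow> ('a \<Rightarrow> 'b) \<Rightarrow> bool" where
  "strict_ghost_contraction U V f \<longleftrightarrow> ghost_contraction U V f \<and> zero_kernel U V f \<subseteq> ghosts U"

definition is_factorization ::
  "('a, 'm) stm_scheme \<Rightarrow> ('b, 'n) stm_scheme \<Rightarrow> ('a \<Rightarrow> 'b) \<Rightarrow>
   'c stm \<Rightarrow> 'd stm \<Rightarrow> ('a \<Rightarrow> 'c) \<Rightarrow> ('c \<Rightarrow> 'd) \<Rightarrow> ('d \<Rightarrow> 'b) \<Rightarrow> bool" where
  "is_factorization U V \<alpha> U1 W1 lam bet mu \<longleftrightarrow>
     supertropical_monoid U1 \<and> supertropical_monoid W1 \<and>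
     ideal_compression U U1 lam \<and> strict_ghost_contraction U1 W1 bet \<and>
     tangible_transmission W1 V mu \<and> fiber_contraction W1 V mu \<and>
     (\<forall>x\<in>st_carrier U. \<alpha> x = mu (bet (lam x)))"

definition cls :: "('a, 'm) stm_scheme \<Rightarrow> ('a \<times> 'a) set \<Rightarrow> 'a \<Rightarrow> 'a set" where
  "cls U E x = {y\<in>st_carrier U. (x, y) \<in> E}"

definition quot_stm :: "('a, 'm) stm_scheme \<Rightarrow> ('a \<times> 'a) set \<Rightarrow> 'a set stm" where
  "quot_stm U E = \<lparr> st_carrier = cls U E ` st_carrier U,
     st_mult = (\<lambda>X Y. cls U E (st_mult U (SOME x. x \<in> X) (SOME y. y \<in> Y))),
     st_zero = cls U E (st_zero U),
     st_one = cls U E (st_one U),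
     st_e = cls U E (st_e U),
     st_le = (\<lambda>X Y. \<exists>a\<in>X \<inter> ghosts U. \<exists>b\<in>Y \<inter> ghosts U. st_le U a b) \<rparr>"

definition quot_map :: "('a, 'm) stm_scheme \<Rightarrow> ('a \<times> 'a) set \<Rightarrow> 'a \<Rightarrow> 'a set" where
  "quot_map U E = cls U E"

text \<open>\<open>E(U,\<AA>)\<close> for an ideal \<open>\<AA> \<supseteq> M\<close>.\<close>
definition rel_E :: "('a, 'm) stm_scheme \<Rightarrow> 'a set \<Rightarrow> ('a \<times> 'a) set" where
  "rel_E U A = {(x, y). x \<in> st_carrier U \<and> y \<in> st_carrier U \<and>
     (x = y \<or> (x \<in> A \<and> y \<in> A \<and> st_mult U (st_e U) x = st_mult U (st_e U) y))}"

text \<open>\<open>F(U,\<gamma>)\<close> for a map \<open>\<gamma>\<close> from the ghosts of U onto N, \<open>z\<close> being the zero of N.\<close>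
definition rel_F :: "('a, 'm) stm_scheme \<Rightarrow> ('a \<Rightarrow> 'b) \<Rightarrow> 'b \<Rightarrow> ('a \<times> 'a) set" where
  "rel_F U g z = {(x, y). x \<in> st_carrier U \<and> y \<in> st_carrier U \<and>
     (x = y \<or> (x \<in> ghosts U \<and> y \<in> ghosts U \<and> g x = g y) \<or>
      (g (st_mult U (st_e U) x) = z \<and> g (st_mult U (st_e U) y) = z))}"

end

theory Submission
  imports Defs
begin

text \<open>
  Let \<open>\<AA>\<close> be the ghost kernel of \<open>\<alpha>\<close>. In any factorization \<open>\<alpha> = \<mu>\<beta>\<lambda>\<close> of the required
  kind, \<open>\<lambda> x\<close> is a ghost exactly when \<open>x \<in> \<AA>\<close>: otherwise \<open>\<beta>\<lambda> x\<close> is tangible (\<open>\<beta>\<close> is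
  strict), and the tangible \<open>\<mu>\<close> could send it into the ghosts only as \<open>0\<close>, which \<open>\<mu>\<close>, being
  injective on ghosts, forbids. Consequently the kernels of \<open>\<lambda>\<close> and \<open>\<beta>\<lambda>\<close> are forced:
  \<open>\<lambda> x = \<lambda> y\<close> iff \<open>x = y\<close> or \<open>x, y \<in> \<AA>\<close> with \<open>e x = e y\<close> (the relation \<open>E(U,\<AA>)\<close>), and
  \<open>\<beta>\<lambda> x = \<beta>\<lambda> y\<close> iff \<open>x = y\<close> or \<open>x, y \<in> \<AA>\<close> with \<open>\<alpha> x = \<alpha> y\<close>; on ghosts their orders
  are those of \<open>e x\<close> and of \<open>\<alpha> x\<close>. Two factorizations are therefore related by the
  isomorphisms induced between surjections with a common kernel and ghost order, which gives
  uniqueness. Existence comes from the canonical quotients: \<open>F(U/E(U,\<AA>), \<gamma>)\<close> is the image of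
  the second relation, a TE-relation containing \<open>E(U,\<AA>)\<close>, so the composite quotient map has
  the second kernel and \<open>\<alpha>\<close> descends to a tangible fiber contraction \<open>\<mu>\<close>.
\<close>

section \<open>Supertropical monoids\<close>

locale supertropical =
  fixes U :: "('a, 'm) stm_scheme"
  assumes mult_closed: "x \<in> st_carrier U \<Longrightarrow> y \<in> st_carrier U \<Longrightarrow> st_mult U x y \<in> st_carrier U"
    and mult_assoc: "x \<in> st_carrier U \<Longrightarrow> y \<in> st_carrier U \<Longrightarrow> z \<in> st_carrier U \<Longrightarrow>
      st_mult U (st_mult U x y) z = st_mult U x (st_mult U y z)"
    and mult_commute: "x \<in> st_carrier U \<Longrightarrow> y \<in> st_carrier U \<Longrightarrow> st_mult U x y = st_mult U y x"
    and one_closed: "st_one U \<in> st_carrier U"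
    and mult_one_left: "x \<in> st_carrier U \<Longrightarrow> st_mult U (st_one U) x = x"
    and zero_closed: "st_zero U \<in> st_carrier U"
    and mult_zero_left: "x \<in> st_carrier U \<Longrightarrow> st_mult U (st_zero U) x = st_zero U"
    and e_closed: "st_e U \<in> st_carrier U"
    and e_idem: "st_mult U (st_e U) (st_e U) = st_e U"
    and e_mult_eq_zero: "x \<in> st_carrier U \<Longrightarrow> st_mult U (st_e U) x = st_zero U \<Longrightarrow> x = st_zero U"
    and ghost_le_refl: "x \<in> ghosts U \<Longrightarrow> st_le U x x"
    and ghost_le_antisym: "x \<in> ghosts U \<Longrightarrow> y \<in> ghosts U \<Longrightarrow> st_le U x y \<Longrightarrow> st_le U y x \<Longrightarrow> x = y"
    and ghost_le_trans: "x \<in> ghosts U \<Longrightarrow> y \<in> ghosts U \<Longrightarrow> z \<in> ghosts U \<Longrightarrow>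
      st_le U x y \<Longrightarrow> st_le U y z \<Longrightarrow> st_le U x z"
    and ghost_le_total: "x \<in> ghosts U \<Longrightarrow> y \<in> ghosts U \<Longrightarrow> st_le U x y \<or> st_le U y x"
    and ghost_le_mult: "x \<in> ghosts U \<Longrightarrow> y \<in> ghosts U \<Longrightarrow> z \<in> ghosts U \<Longrightarrow>
      st_le U x y \<Longrightarrow> st_le U (st_mult U x z) (st_mult U y z)"
    and zero_ghost_le: "x \<in> ghosts U \<Longrightarrow> st_le U (st_zero U) x"

lemma supertropicalI: "supertropical_monoid U \<Longrightarrow> supertropical U"
  unfolding supertropical_monoid_def by (elim conjE, unfold_locales) metis+

lemma (in supertropical) supertropical_monoid: "supertropical_monoid U"
  unfolding supertropical_monoid_def
  by (intro conjI ballI impI; (elim conjE)?)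
    (simp_all add: mult_closed mult_assoc one_closed mult_one_left zero_closed mult_zero_left
      e_closed e_idem e_mult_eq_zero ghost_le_refl ghost_le_antisym ghost_le_total ghost_le_mult
      zero_ghost_le, (metis mult_commute ghost_le_trans)+)

context supertropical
begin

lemma e_mult_ghost: "x \<in> st_carrier U \<Longrightarrow> st_mult U (st_e U) x \<in> ghosts U"
  unfolding ghosts_def by blast

lemma ghost_iff: "m \<in> ghosts U \<longleftrightarrow> m \<in> st_carrier U \<and> st_mult U (st_e U) m = m"
proof
  assume "m \<in> ghosts U"
  then obtain u where u: "u \<in> st_carrier U" "m = st_mult U (st_e U) u"
    unfolding ghosts_def by blast
  then show "m \<in> st_carrier U \<and> st_mult U (st_e U) m = m"
    by (simp add: mult_closed e_closed e_idem flip: mult_assoc)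
next
  assume "m \<in> st_carrier U \<and> st_mult U (st_e U) m = m"
  then show "m \<in> ghosts U"
    using e_mult_ghost by metis
qed

lemma ghost_in_carrier: "m \<in> ghosts U \<Longrightarrow> m \<in> st_carrier U"
  using ghost_iff by blast

lemma e_mult_of_ghost: "m \<in> ghosts U \<Longrightarrow> st_mult U (st_e U) m = m"
  using ghost_iff by blast

lemma zero_ghost: "st_zero U \<in> ghosts U"
  using ghost_iff zero_closed e_closed mult_zero_left mult_commute by metis

lemma ghost_mult: "m \<in> ghosts U \<Longrightarrow> x \<in> st_carrier U \<Longrightarrow> st_mult U m x \<in> ghosts U"
  by (simp add: ghost_iff mult_closed e_closed flip: mult_assoc)

lemma e_mult_mult:
  "x \<in> st_carrier U \<Longrightarrow> y \<in> st_carrier U \<Longrightarrow>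
   st_mult U (st_e U) (st_mult U x y) = st_mult U (st_mult U (st_e U) x) (st_mult U (st_e U) y)"
  by (metis e_closed e_idem mult_assoc mult_closed mult_commute)

lemma e_mult_eq_zero_iff:
  "x \<in> st_carrier U \<Longrightarrow> st_mult U (st_e U) x = st_zero U \<longleftrightarrow> x = st_zero U"
  using e_mult_eq_zero e_mult_of_ghost zero_ghost by blast

lemma transmission_ghost:
  "transmission U V f \<Longrightarrow> m \<in> ghosts U \<Longrightarrow> f m \<in> ghosts V"
  unfolding transmission_def ghosts_def using e_closed by auto

end

section \<open>TE-relations and quotients\<close>

definition quot_rel :: "('a, 'm) stm_scheme \<Rightarrow> ('a \<times> 'a) set \<Rightarrow> ('a \<times> 'a) set \<Rightarrow> ('a set \<times> 'a set) set" where
  "quot_rel U E R = {(cls U E x, cls U E y) | x y. (x, y) \<in> R}"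

locale te_relation = supertropical U for U :: "('a, 'm) stm_scheme" +
  fixes E :: "('a \<times> 'a) set"
  assumes rel_on_carrier: "E \<subseteq> st_carrier U \<times> st_carrier U"
    and rel_refl: "x \<in> st_carrier U \<Longrightarrow> (x, x) \<in> E"
    and rel_sym: "(x, y) \<in> E \<Longrightarrow> (y, x) \<in> E"
    and rel_trans: "(x, y) \<in> E \<Longrightarrow> (y, z) \<in> E \<Longrightarrow> (x, z) \<in> E"
    and mult_compat: "(x, x') \<in> E \<Longrightarrow> (y, y') \<in> E \<Longrightarrow> (st_mult U x y, st_mult U x' y') \<in> E"
    and e_mult_zero_rel: "x \<in> st_carrier U \<Longrightarrow> (st_mult U (st_e U) x, st_zero U) \<in> E \<Longrightarrow>
      (x, st_zero U) \<in> E"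
    and ghost_convex: "a \<in> ghosts U \<Longrightarrow> b \<in> ghosts U \<Longrightarrow> c \<in> ghosts U \<Longrightarrow>
      st_le U a b \<Longrightarrow> st_le U b c \<Longrightarrow> (a, c) \<in> E \<Longrightarrow> (a, b) \<in> E"
begin

abbreviation Q where "Q \<equiv> quot_stm U E"
abbreviation q where "q \<equiv> cls U E"

lemma rel_in_carrier: "(x, y) \<in> E \<Longrightarrow> x \<in> st_carrier U \<and> y \<in> st_carrier U"
  using rel_on_carrier by blast

lemma self_in_cls: "x \<in> st_carrier U \<Longrightarrow> x \<in> q x"
  unfolding cls_def using rel_refl by blast

lemma mem_cls_iff: "z \<in> q x \<longleftrightarrow> z \<in> st_carrier U \<and> (x, z) \<in> E"
  unfolding cls_def by blast

lemma cls_eq_iff: "x \<in> st_carrier U \<Longrightarrow> y \<in> st_carrier U \<Longrightarrow> q x = q y \<longleftrightarrow> (x, y) \<in> E"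
  unfolding cls_def using rel_refl rel_sym rel_trans by blast

lemma cls_eqI: "(x, y) \<in> E \<Longrightarrow> q x = q y"
  using cls_eq_iff rel_in_carrier by blast

lemma cls_of_mem: "z \<in> q x \<Longrightarrow> q z = q x"
  using mem_cls_iff rel_sym cls_eqI by blast

lemma quot_carrier: "st_carrier Q = q ` st_carrier U"
  and quot_zero: "st_zero Q = q (st_zero U)"
  and quot_one: "st_one Q = q (st_one U)"
  and quot_e: "st_e Q = q (st_e U)"
  and quot_le: "st_le Q X Y \<longleftrightarrow> (\<exists>a\<in>X \<inter> ghosts U. \<exists>b\<in>Y \<inter> ghosts U. st_le U a b)"
  unfolding quot_stm_def by simp_all

lemma quot_mult:
  assumes "x \<in> st_carrier U" "y \<in> st_carrier U"
  shows "st_mult Q (q x) (q y) = q (st_mult U x y)"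
proof -
  have "(SOME z. z \<in> q x) \<in> q x" "(SOME z. z \<in> q y) \<in> q y"
    using assms self_in_cls by (metis someI)+
  then have "q (st_mult U (SOME z. z \<in> q x) (SOME z. z \<in> q y)) = q (st_mult U x y)"
    using mem_cls_iff mult_compat rel_sym cls_eqI by metis
  then show ?thesis
    unfolding quot_stm_def by simp
qed

lemma quot_ghosts: "ghosts Q = q ` ghosts U"
proof -
  have "ghosts Q = (\<lambda>x. st_mult Q (q (st_e U)) (q x)) ` st_carrier U"
    unfolding ghosts_def quot_carrier quot_e by (simp add: image_image)
  also have "\<dots> = (\<lambda>x. q (st_mult U (st_e U) x)) ` st_carrier U"
    using quot_mult e_closed by simp
  finally show ?thesis
    unfolding ghosts_def by (simp add: image_image)
qed

lemma quot_ghostE: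
  assumes "X \<in> ghosts Q"
  obtains a where "a \<in> ghosts U" "X = q a" "a \<in> X"
  using assms self_in_cls ghost_in_carrier unfolding quot_ghosts by blast

lemma quot_ghost_cls:
  assumes "X \<in> ghosts Q" "a \<in> X"
  shows "X = q a"
  using assms by (metis quot_ghostE cls_of_mem)

lemma ghost_rel_between:
  assumes "a \<in> ghosts U" "b \<in> ghosts U" "b' \<in> ghosts U"
    and "st_le U a b" "st_le U b' a" "(b, b') \<in> E"
  shows "(a, b) \<in> E"
proof -
  have "(b', a) \<in> E"
    using ghost_convex[OF assms(3,1,2,5,4)] assms(6) rel_sym by blast
  then show ?thesis
    using assms(6) rel_sym rel_trans by blast
qed

lemma quot_ghost_le_antisym:
  assumes "X \<in> ghosts Q" "Y \<in> ghosts Q" "st_le Q X Y" "st_le Q Y X"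
  shows "X = Y"
proof -
  obtain a b where ab: "a \<in> ghosts U" "b \<in> ghosts U" "a \<in> X" "b \<in> Y" "st_le U a b"
    using assms(3) unfolding quot_le by blast
  obtain a' b' where ab': "a' \<in> ghosts U" "b' \<in> ghosts U" "a' \<in> X" "b' \<in> Y" "st_le U b' a'"
    using assms(4) unfolding quot_le by blast
  have XY: "X = q a" "Y = q b"
    using quot_ghost_cls assms(1,2) ab(3,4) by blast+
  then have aa': "(a, a') \<in> E" and bb': "(b, b') \<in> E"
    using ab'(3,4) by (simp_all add: mem_cls_iff)
  have "(a, b) \<in> E"
  proof (cases "st_le U b' a")
    case True
    then show ?thesis
      using ghost_rel_between ab ab' bb' by blast
  next
    case False
    then have "st_le U a b'"
      using ghost_le_total ab ab' by blast
    then have "(a, b') \<in> E"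
      using ghost_convex[OF ab(1) ab'(2) ab'(1) _ ab'(5) aa'] by blast
    then show ?thesis
      using bb' rel_sym rel_trans by blast
  qed
  then show ?thesis
    using XY cls_eqI by simp
qed

lemma quot_le_cls:
  assumes "a \<in> ghosts U" "b \<in> ghosts U"
  shows "st_le Q (q a) (q b) \<longleftrightarrow>
    (\<exists>a' b'. a' \<in> ghosts U \<and> b' \<in> ghosts U \<and> (a, a') \<in> E \<and> (b, b') \<in> E \<and> st_le U a' b')"
  unfolding quot_le Bex_def Int_iff mem_cls_iff using rel_in_carrier by blast

lemma quot_ghost_le_trans:
  assumes "X \<in> ghosts Q" "Y \<in> ghosts Q" "Z \<in> ghosts Q" "st_le Q X Y" "st_le Q Y Z"
  shows "st_le Q X Z"
proof -
  obtain a b where ab: "a \<in> ghosts U" "b \<in> ghosts U" "a \<in> X" "b \<in> Y" "st_le U a b"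
    using assms(4) unfolding quot_le by blast
  obtain b' c where bc: "b' \<in> ghosts U" "c \<in> ghosts U" "b' \<in> Y" "c \<in> Z" "st_le U b' c"
    using assms(5) unfolding quot_le by blast
  show ?thesis
  proof (cases "st_le U b c")
    case True
    then have "st_le U a c"
      using ghost_le_trans ab bc by blast
    then show ?thesis
      unfolding quot_le using ab bc by blast
  next
    case False
    then have "st_le U c b"
      using ghost_le_total ab(2) bc(2) by blast
    moreover have "(b, b') \<in> E"
      using quot_ghost_cls[OF assms(2) ab(4)] bc(3) by (simp add: mem_cls_iff)
    ultimately have "(c, b) \<in> E"
      using ghost_rel_between[OF bc(2) ab(2) bc(1)] bc(5) by blast
    then have "b \<in> Z"
      using quot_ghost_cls[OF assms(3) bc(4)] by (simp add: mem_cls_iff rel_in_carrier)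
    then show ?thesis
      unfolding quot_le using ab by blast
  qed
qed

lemma quot_e_mult_eq_zero:
  assumes "X \<in> st_carrier Q" "st_mult Q (st_e Q) X = st_zero Q"
  shows "X = st_zero Q"
proof -
  obtain x where x: "x \<in> st_carrier U" "X = q x"
    using assms(1) unfolding quot_carrier by blast
  then have "q (st_mult U (st_e U) x) = q (st_zero U)"
    using assms(2) quot_mult e_closed unfolding quot_e quot_zero by simp
  then have "(st_mult U (st_e U) x, st_zero U) \<in> E"
    using cls_eq_iff mult_closed e_closed zero_closed x(1) by blast
  then show ?thesis
    using x e_mult_zero_rel cls_eqI quot_zero by simp
qed

lemma quot_ghost_le_mult:
  assumes "X \<in> ghosts Q" "Y \<in> ghosts Q" "Z \<in> ghosts Q" "st_le Q X Y"
  shows "st_le Q (st_mult Q X Z) (st_mult Q Y Z)"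
proof -
  obtain a b c where abc: "a \<in> ghosts U" "b \<in> ghosts U" "c \<in> ghosts U"
    "X = q a" "Y = q b" "Z = q c" "st_le U a b"
    using assms quot_ghost_cls quot_ghostE unfolding quot_le by (metis IntE)
  then have "st_mult U a c \<in> ghosts U" "st_mult U b c \<in> ghosts U"
    "st_le U (st_mult U a c) (st_mult U b c)"
    using ghost_mult ghost_le_mult ghost_in_carrier by blast+
  then show ?thesis
    unfolding quot_le using abc quot_mult ghost_in_carrier self_in_cls by (metis IntI)
qed

lemma quot_supertropical: "supertropical Q"
proof unfold_locales
  fix X Y Z
  show "X \<in> st_carrier Q \<Longrightarrow> Y \<in> st_carrier Q \<Longrightarrow> st_mult Q X Y \<in> st_carrier Q"
    unfolding quot_carrier by (auto simp: quot_mult mult_closed)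
  show "X \<in> st_carrier Q \<Longrightarrow> Y \<in> st_carrier Q \<Longrightarrow> Z \<in> st_carrier Q \<Longrightarrow>
      st_mult Q (st_mult Q X Y) Z = st_mult Q X (st_mult Q Y Z)"
    unfolding quot_carrier by (auto simp: quot_mult mult_closed mult_assoc)
  show "X \<in> st_carrier Q \<Longrightarrow> Y \<in> st_carrier Q \<Longrightarrow> st_mult Q X Y = st_mult Q Y X"
    unfolding quot_carrier using quot_mult mult_commute by auto
  show "X \<in> ghosts Q \<Longrightarrow> st_le Q X X"
    unfolding quot_le by (metis IntI quot_ghostE ghost_le_refl)
  show "X \<in> ghosts Q \<Longrightarrow> Y \<in> ghosts Q \<Longrightarrow> st_le Q X Y \<or> st_le Q Y X"
    unfolding quot_le by (metis IntI quot_ghostE ghost_le_total)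
  show "X \<in> ghosts Q \<Longrightarrow> st_le Q (st_zero Q) X"
    unfolding quot_le quot_zero
    by (metis IntI quot_ghostE zero_ghost zero_closed self_in_cls zero_ghost_le)
  show "X \<in> st_carrier Q \<Longrightarrow> st_mult Q (st_e Q) X = st_zero Q \<Longrightarrow> X = st_zero Q"
    by (rule quot_e_mult_eq_zero)
  show "X \<in> ghosts Q \<Longrightarrow> Y \<in> ghosts Q \<Longrightarrow> st_le Q X Y \<Longrightarrow> st_le Q Y X \<Longrightarrow> X = Y"
    by (rule quot_ghost_le_antisym)
  show "X \<in> ghosts Q \<Longrightarrow> Y \<in> ghosts Q \<Longrightarrow> Z \<in> ghosts Q \<Longrightarrow>
      st_le Q X Y \<Longrightarrow> st_le Q Y Z \<Longrightarrow> st_le Q X Z"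
    by (rule quot_ghost_le_trans)
  show "X \<in> ghosts Q \<Longrightarrow> Y \<in> ghosts Q \<Longrightarrow> Z \<in> ghosts Q \<Longrightarrow> st_le Q X Y \<Longrightarrow>
      st_le Q (st_mult Q X Z) (st_mult Q Y Z)"
    by (rule quot_ghost_le_mult)
qed (auto simp: quot_carrier quot_one quot_zero quot_e quot_mult one_closed mult_one_left
    zero_closed mult_zero_left e_closed e_idem)

lemma quot_map_transmission: "transmission U Q q"
  unfolding transmission_def
  by (auto simp: quot_carrier quot_zero quot_one quot_e quot_mult quot_le
      intro: self_in_cls ghost_in_carrier)

lemma quot_le_cls_iff:
  assumes V: "supertropical V"
    and rel_iff: "\<And>a b. a \<in> ghosts U \<Longrightarrow> b \<in> ghosts U \<Longrightarrow> (a, b) \<in> E \<longleftrightarrow> f a = f b"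
    and ghost: "\<And>a. a \<in> ghosts U \<Longrightarrow> f a \<in> ghosts V"
    and mono: "\<And>a b. a \<in> ghosts U \<Longrightarrow> b \<in> ghosts U \<Longrightarrow> st_le U a b \<Longrightarrow> st_le V (f a) (f b)"
    and ab: "a \<in> ghosts U" "b \<in> ghosts U"
  shows "st_le Q (q a) (q b) \<longleftrightarrow> st_le V (f a) (f b)"
proof
  assume "st_le Q (q a) (q b)"
  then obtain a' b' where a'b': "a' \<in> ghosts U" "b' \<in> ghosts U" "(a, a') \<in> E" "(b, b') \<in> E"
    "st_le U a' b'"
    using quot_le_cls ab by blast
  then have "f a = f a'" "f b = f b'"
    using rel_iff ab by blast+
  then show "st_le V (f a) (f b)"
    using mono a'b' by simp
next
  assume le: "st_le V (f a) (f b)"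
  show "st_le Q (q a) (q b)"
  proof (cases "st_le U a b")
    case True
    then show ?thesis
      using quot_le_cls ab rel_refl ghost_in_carrier by blast
  next
    case False
    then have "st_le V (f b) (f a)"
      using mono ghost_le_total ab by blast
    then have "f a = f b"
      using supertropical.ghost_le_antisym[OF V ghost[OF ab(1)] ghost[OF ab(2)] le] by blast
    then have "(a, b) \<in> E"
      using rel_iff ab by blast
    then show ?thesis
      using quot_le_cls ab rel_refl ghost_le_refl ghost_in_carrier by blast
  qed
qed

lemma quot_rel_cls_iff:
  assumes "te_relation U R" "E \<subseteq> R" "x \<in> st_carrier U" "y \<in> st_carrier U"
  shows "(q x, q y) \<in> quot_rel U E R \<longleftrightarrow> (x, y) \<in> R"
proof
  assume "(q x, q y) \<in> quot_rel U E R"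
  then obtain x' y' where "(x', y') \<in> R" "q x = q x'" "q y = q y'"
    unfolding quot_rel_def by blast
  moreover have "x' \<in> st_carrier U" "y' \<in> st_carrier U"
    using \<open>(x', y') \<in> R\<close> te_relation.rel_in_carrier[OF assms(1)] by blast+
  ultimately show "(x, y) \<in> R"
    using assms cls_eq_iff te_relation.rel_sym te_relation.rel_trans by (metis subsetD)
qed (auto simp: quot_rel_def)

lemma quot_relE:
  assumes "te_relation U R" "(X, Y) \<in> quot_rel U E R"
  obtains x y where "x \<in> st_carrier U" "y \<in> st_carrier U" "X = q x" "Y = q y" "(x, y) \<in> R"
proof -
  obtain x y where "(x, y) \<in> R" "X = q x" "Y = q y"
    using assms(2) unfolding quot_rel_def by blast
  then show ?thesis
    using that te_relation.rel_in_carrier[OF assms(1)] by blast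
qed

lemma quot_rel_trans:
  assumes R: "te_relation U R" "E \<subseteq> R"
    and "(X, Y) \<in> quot_rel U E R" "(Y, Z) \<in> quot_rel U E R"
  shows "(X, Z) \<in> quot_rel U E R"
proof -
  obtain x y where xy: "y \<in> st_carrier U" "X = q x" "Y = q y" "(x, y) \<in> R"
    using quot_relE[OF R(1) assms(3)] by blast
  obtain y' z where yz: "y' \<in> st_carrier U" "Y = q y'" "Z = q z" "(y', z) \<in> R"
    using quot_relE[OF R(1) assms(4)] by blast
  have "(y, y') \<in> E"
    using xy yz cls_eq_iff by metis
  then have "(x, z) \<in> R"
    using xy yz R(2) te_relation.rel_trans[OF R(1)] by blast
  then show ?thesis
    unfolding xy(2) yz(3) quot_rel_def by blast
qed

lemma quot_rel_mult_compat:
  assumes R: "te_relation U R"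
    and "(X, X') \<in> quot_rel U E R" "(Y, Y') \<in> quot_rel U E R"
  shows "(st_mult Q X Y, st_mult Q X' Y') \<in> quot_rel U E R"
proof -
  obtain x x' where x: "x \<in> st_carrier U" "x' \<in> st_carrier U" "X = q x" "X' = q x'" "(x, x') \<in> R"
    using quot_relE[OF R assms(2)] by blast
  obtain y y' where y: "y \<in> st_carrier U" "y' \<in> st_carrier U" "Y = q y" "Y' = q y'" "(y, y') \<in> R"
    using quot_relE[OF R assms(3)] by blast
  have "(st_mult U x y, st_mult U x' y') \<in> R"
    using x y te_relation.mult_compat[OF R] by blast
  then show ?thesis
    unfolding x(3,4) y(3,4) quot_mult[OF x(1) y(1)] quot_mult[OF x(2) y(2)] quot_rel_def
    by blast
qed

lemma quot_rel_ghost_convex: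
  assumes R: "te_relation U R" "E \<subseteq> R"
    and ghosts: "X \<in> ghosts Q" "Y \<in> ghosts Q" "Z \<in> ghosts Q"
    and le: "st_le Q X Y" "st_le Q Y Z"
    and XZ: "(X, Z) \<in> quot_rel U E R"
  shows "(X, Y) \<in> quot_rel U E R"
proof -
  obtain a b where ab: "a \<in> ghosts U" "b \<in> ghosts U" "a \<in> X" "b \<in> Y" "st_le U a b"
    using le(1) unfolding quot_le by blast
  obtain b' c where bc: "b' \<in> ghosts U" "c \<in> ghosts U" "b' \<in> Y" "c \<in> Z" "st_le U b' c"
    using le(2) unfolding quot_le by blast
  have XYZ: "X = q a" "Y = q b" "Z = q c"
    using ghosts ab bc quot_ghost_cls by blast+
  have "(a, c) \<in> R"
    using XZ XYZ quot_rel_cls_iff[OF R] ab bc ghost_in_carrier by simp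
  have "(a, b) \<in> R"
  proof (cases "st_le U b c")
    case True
    then show ?thesis
      using te_relation.ghost_convex[OF R(1)] ab bc \<open>(a, c) \<in> R\<close> by blast
  next
    case False
    then have "st_le U c b"
      using ghost_le_total ab bc by blast
    moreover have "(b, b') \<in> E"
      using XYZ bc(3) by (simp add: mem_cls_iff)
    ultimately have "(c, b) \<in> E"
      using ghost_rel_between[OF bc(2) ab(2) bc(1)] bc(5) by blast
    then show ?thesis
      using \<open>(a, c) \<in> R\<close> R(2) te_relation.rel_trans[OF R(1)] by blast
  qed
  then show ?thesis
    using XYZ unfolding quot_rel_def by blast
qed

lemma quot_te_relation:
  assumes R: "te_relation U R" and "E \<subseteq> R"
  shows "te_relation Q (quot_rel U E R)"
proof -
  interpret R: te_relation U R
    by (fact R)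
  note rel_iff = quot_rel_cls_iff[OF R \<open>E \<subseteq> R\<close>]
  show ?thesis
  proof (intro te_relation.intro quot_supertropical te_relation_axioms.intro, goal_cases)
    case 1
    then show ?case
      by (auto simp: quot_rel_def quot_carrier dest: R.rel_in_carrier)
  next
    case (2 X)
    then show ?case
      by (auto simp: quot_rel_def quot_carrier intro: R.rel_refl)
  next
    case (3 X Y)
    then show ?case
      by (auto simp: quot_rel_def intro: R.rel_sym)
  next
    case (4 X Y Z)
    then show ?case
      using quot_rel_trans[OF R \<open>E \<subseteq> R\<close>] by blast
  next
    case (5 X X' Y Y')
    then show ?case
      using quot_rel_mult_compat[OF R] by blast
  next
    case (6 X)
    obtain x where x: "x \<in> st_carrier U" "X = q x"
      using 6(1) unfolding quot_carrier by blast
    then have "(st_mult U (st_e U) x, st_zero U) \<in> R"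
      using 6 rel_iff quot_mult quot_e quot_zero e_closed mult_closed zero_closed by simp
    then show ?case
      using x R.e_mult_zero_rel quot_zero unfolding quot_rel_def by blast
  next
    case (7 X Y Z)
    then show ?case
      using quot_rel_ghost_convex[OF R \<open>E \<subseteq> R\<close>] by blast
  qed
qed

end

definition kernel_rel :: "('a, 'm) stm_scheme \<Rightarrow> 'a set \<Rightarrow> ('a \<Rightarrow> 'b) \<Rightarrow> ('a \<times> 'a) set" where
  "kernel_rel U I f = {(x, y). x \<in> st_carrier U \<and> y \<in> st_carrier U \<and>
     (x = y \<or> (x \<in> I \<and> y \<in> I \<and> f x = f y))}"

lemma rel_E_eq_kernel_rel: "rel_E U A = kernel_rel U A (st_mult U (st_e U))"
  unfolding rel_E_def kernel_rel_def ..

lemma (in supertropical) kernel_rel_te_relation: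
  assumes ideal: "I \<subseteq> st_carrier U" "ghosts U \<subseteq> I"
      "\<And>x y. x \<in> I \<Longrightarrow> y \<in> st_carrier U \<Longrightarrow> st_mult U x y \<in> I"
    and cong: "\<And>x x' y y'. x \<in> st_carrier U \<Longrightarrow> x' \<in> st_carrier U \<Longrightarrow> y \<in> st_carrier U \<Longrightarrow>
      y' \<in> st_carrier U \<Longrightarrow> f x = f x' \<Longrightarrow> f y = f y' \<Longrightarrow> f (st_mult U x y) = f (st_mult U x' y')"
    and zero: "\<And>x. x \<in> st_carrier U \<Longrightarrow> f (st_mult U (st_e U) x) = f (st_zero U) \<Longrightarrow>
      x \<in> I \<and> f x = f (st_zero U)"
    and convex: "\<And>a b c. a \<in> ghosts U \<Longrightarrow> b \<in> ghosts U \<Longrightarrow> c \<in> ghosts U \<Longrightarrow>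
      st_le U a b \<Longrightarrow> st_le U b c \<Longrightarrow> f a = f c \<Longrightarrow> f a = f b"
  shows "te_relation U (kernel_rel U I f)"
proof unfold_locales
  fix x x' y y'
  assume x: "(x, x') \<in> kernel_rel U I f" and y: "(y, y') \<in> kernel_rel U I f"
  then have carrier: "x \<in> st_carrier U" "x' \<in> st_carrier U" "y \<in> st_carrier U" "y' \<in> st_carrier U"
    and "f x = f x'" "f y = f y'"
    unfolding kernel_rel_def by auto
  then have "f (st_mult U x y) = f (st_mult U x' y')"
    using cong by blast
  moreover have "st_mult U x y \<in> I \<and> st_mult U x' y' \<in> I" if "\<not> (x = x' \<and> y = y')"
  proof -
    have "(x \<in> I \<and> x' \<in> I) \<or> (y \<in> I \<and> y' \<in> I)"
      using that x y unfolding kernel_rel_def by auto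
    then show ?thesis
      using carrier ideal(1,3) mult_commute by (metis subsetD)
  qed
  ultimately show "(st_mult U x y, st_mult U x' y') \<in> kernel_rel U I f"
    using carrier mult_closed unfolding kernel_rel_def by auto
next
  fix x
  assume "x \<in> st_carrier U" "(st_mult U (st_e U) x, st_zero U) \<in> kernel_rel U I f"
  then show "(x, st_zero U) \<in> kernel_rel U I f"
    using zero e_mult_eq_zero zero_closed unfolding kernel_rel_def by auto
next
  fix a b c
  assume "a \<in> ghosts U" "b \<in> ghosts U" "c \<in> ghosts U" "st_le U a b" "st_le U b c"
    "(a, c) \<in> kernel_rel U I f"
  then show "(a, b) \<in> kernel_rel U I f"
    using convex ghost_le_antisym ghost_in_carrier ideal(2) unfolding kernel_rel_def by auto
qed (use ideal(1) in \<open>auto simp: kernel_rel_def\<close>)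

section \<open>Transmissions induced on quotients\<close>

lemma transmission_cong:
  assumes "supertropical U" "transmission U V f" "\<And>x. x \<in> st_carrier U \<Longrightarrow> f x = g x"
  shows "transmission U V g"
  using assms supertropical.zero_closed supertropical.one_closed supertropical.e_closed
    supertropical.mult_closed supertropical.ghost_in_carrier
  unfolding transmission_def by (smt (verit, best) image_subset_iff)

lemma transmission_comp:
  assumes "supertropical U" "transmission U V f" "transmission V W g"
  shows "transmission U W (\<lambda>x. g (f x))"
  using assms supertropical.transmission_ghost[OF assms(1,2)]
  unfolding transmission_def by (auto simp: image_subset_iff)

lemma induced_transmission:
  assumes U: "supertropical U"
    and f: "transmission U X f" "f ` st_carrier U = st_carrier X"
    and f': "transmission U X' f'" "f' ` st_carrier U = st_carrier X'"
    and kernel: "\<And>x y. x \<in> st_carrier U \<Longrightarrow> y \<in> st_carrier U \<Longrightarrow> f x = f y \<longleftrightarrow> f' x = f' y"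
    and order: "\<And>x y. x \<in> st_carrier U \<Longrightarrow> y \<in> st_carrier U \<Longrightarrow> f x \<in> ghosts X \<Longrightarrow>
      f y \<in> ghosts X \<Longrightarrow> st_le X (f x) (f y) \<Longrightarrow> st_le X' (f' x) (f' y)"
  defines "h \<equiv> \<lambda>u. f' (SOME x. x \<in> st_carrier U \<and> f x = u)"
  shows "transmission X X' h" and "\<And>x. x \<in> st_carrier U \<Longrightarrow> h (f x) = f' x"
    and "bij_betw h (st_carrier X) (st_carrier X')"
proof -
  interpret U: supertropical U
    by (fact U)
  show h_f: "h (f x) = f' x" if "x \<in> st_carrier U" for x
    unfolding h_def using that kernel by (metis (mono_tags, lifting) someI)
  have "f ` ghosts U = ghosts X"
    unfolding ghosts_def f(2)[symmetric] image_image using f(1) U.e_closed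
    unfolding transmission_def by simp
  then have ghost_rep: "\<exists>x\<in>st_carrier U. u = f x" if "u \<in> ghosts X" for u
    using that U.ghost_in_carrier by blast
  show "transmission X X' h"
    unfolding transmission_def
  proof (intro conjI ballI impI)
    show "h ` st_carrier X \<subseteq> st_carrier X'"
      unfolding f(2)[symmetric] f'(2)[symmetric] using h_f by auto
    show "h (st_zero X) = st_zero X'" "h (st_one X) = st_one X'" "h (st_e X) = st_e X'"
      using h_f f(1) f'(1) U.zero_closed U.one_closed U.e_closed unfolding transmission_def
      by metis+
  next
    fix u v
    assume "u \<in> st_carrier X" "v \<in> st_carrier X"
    then obtain x y where "x \<in> st_carrier U" "y \<in> st_carrier U" "u = f x" "v = f y"
      unfolding f(2)[symmetric] by blast
    then show "h (st_mult X u v) = st_mult X' (h u) (h v)"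
      using h_f f(1) f'(1) U.mult_closed unfolding transmission_def by metis
  next
    fix u v
    assume "u \<in> ghosts X" "v \<in> ghosts X" "st_le X u v"
    then show "st_le X' (h u) (h v)"
      using ghost_rep order h_f by metis
  qed
  have "inj_on h (st_carrier X)"
    unfolding f(2)[symmetric] using h_f kernel by (auto simp: inj_on_def)
  moreover have "h ` st_carrier X = st_carrier X'"
    unfolding f(2)[symmetric] f'(2)[symmetric] image_image using h_f by simp
  ultimately show "bij_betw h (st_carrier X) (st_carrier X')"
    unfolding bij_betw_def by blast
qed

lemma induced_stm_iso:
  assumes U: "supertropical U" and X: "supertropical X" and X': "supertropical X'"
    and f: "transmission U X f" "f ` st_carrier U = st_carrier X"
    and f': "transmission U X' f'" "f' ` st_carrier U = st_carrier X'"
    and kernel: "\<And>x y. x \<in> st_carrier U \<Longrightarrow> y \<in> st_carrier U \<Longrightarrow> f x = f y \<longleftrightarrow> f' x = f' y"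
    and order: "\<And>x y. x \<in> st_carrier U \<Longrightarrow> y \<in> st_carrier U \<Longrightarrow> f x \<in> ghosts X \<Longrightarrow>
      f y \<in> ghosts X \<Longrightarrow> st_le X (f x) (f y) \<longleftrightarrow> st_le X' (f' x) (f' y)"
  shows "\<exists>h. stm_iso X X' h \<and> (\<forall>x\<in>st_carrier U. h (f x) = f' x)"
proof -
  interpret U: supertropical U
    by (fact U)
  have ghost_iff: "f x \<in> ghosts X \<longleftrightarrow> f' x \<in> ghosts X'" if x: "x \<in> st_carrier U" for x
  proof -
    have "f x \<in> ghosts X \<longleftrightarrow> f (st_mult U (st_e U) x) = f x"
      using supertropical.ghost_iff[OF X] f x U.e_closed unfolding transmission_def by auto
    also have "\<dots> \<longleftrightarrow> f' (st_mult U (st_e U) x) = f' x"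
      using kernel U.mult_closed U.e_closed x by blast
    also have "\<dots> \<longleftrightarrow> f' x \<in> ghosts X'"
      using supertropical.ghost_iff[OF X'] f' x U.e_closed unfolding transmission_def by auto
    finally show ?thesis .
  qed
  define h where "h = (\<lambda>u. f' (SOME x. x \<in> st_carrier U \<and> f x = u))"
  define h' where "h' = (\<lambda>u. f (SOME x. x \<in> st_carrier U \<and> f' x = u))"
  have h: "transmission X X' h" "\<And>x. x \<in> st_carrier U \<Longrightarrow> h (f x) = f' x"
    "bij_betw h (st_carrier X) (st_carrier X')"
    unfolding h_def using induced_transmission[OF U f f' kernel] order by blast+
  have h': "transmission X' X h'" "\<And>x. x \<in> st_carrier U \<Longrightarrow> h' (f' x) = f x"
    unfolding h'_def using induced_transmission[OF U f' f] kernel order ghost_iff by blast+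
  have "inv_into (st_carrier X) h v = h' v" if v: "v \<in> st_carrier X'" for v
  proof -
    obtain x where x: "x \<in> st_carrier U" "v = f' x"
      using v unfolding f'(2)[symmetric] by blast
    then have "inv_into (st_carrier X) h (h (f x)) = f x"
      using inv_into_f_f h(3) f(2) unfolding bij_betw_def by fastforce
    then show ?thesis
      using x h(2) h'(2) by simp
  qed
  then have "transmission X' X (inv_into (st_carrier X) h)"
    using transmission_cong[OF X' h'(1)] by metis
  then show ?thesis
    unfolding stm_iso_def using h by blast
qed

section \<open>The canonical factorization\<close>

locale surjective_transmission =
  U: supertropical U + V: supertropical V
  for U :: "('a, 'm) stm_scheme" and V :: "('b, 'n) stm_scheme" +
  fixes \<alpha> :: "'a \<Rightarrow> 'b"
  assumes transmission: "transmission U V \<alpha>"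
    and surjective: "\<alpha> ` st_carrier U = st_carrier V"
begin

lemma map_closed: "x \<in> st_carrier U \<Longrightarrow> \<alpha> x \<in> st_carrier V"
  and map_mult: "x \<in> st_carrier U \<Longrightarrow> y \<in> st_carrier U \<Longrightarrow> \<alpha> (st_mult U x y) = st_mult V (\<alpha> x) (\<alpha> y)"
  and map_zero: "\<alpha> (st_zero U) = st_zero V"
  and map_one: "\<alpha> (st_one U) = st_one V"
  and map_e: "\<alpha> (st_e U) = st_e V"
  and map_mono: "a \<in> ghosts U \<Longrightarrow> b \<in> ghosts U \<Longrightarrow> st_le U a b \<Longrightarrow> st_le V (\<alpha> a) (\<alpha> b)"
  using transmission unfolding transmission_def by blast+

lemma map_ghost: "m \<in> ghosts U \<Longrightarrow> \<alpha> m \<in> ghosts V"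
  using U.transmission_ghost[OF transmission] .

lemma map_e_mult: "x \<in> st_carrier U \<Longrightarrow> \<alpha> (st_mult U (st_e U) x) = st_mult V (st_e V) (\<alpha> x)"
  using map_mult map_e U.e_closed by simp

lemma ghosts_eq_image: "ghosts V = \<alpha> ` ghosts U"
  unfolding ghosts_def surjective[symmetric] image_image by (simp add: map_e_mult)

abbreviation \<AA> where "\<AA> \<equiv> ghost_kernel U V \<alpha>"

lemma mem_ghost_kernel_iff: "x \<in> \<AA> \<longleftrightarrow> x \<in> st_carrier U \<and> \<alpha> x \<in> ghosts V"
  unfolding ghost_kernel_def by blast

lemma ghost_kernel_subset: "\<AA> \<subseteq> st_carrier U"
  unfolding ghost_kernel_def by blast

lemma ghosts_subset_ghost_kernel: "ghosts U \<subseteq> \<AA>"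
  using mem_ghost_kernel_iff map_ghost U.ghost_in_carrier by blast

lemma ghost_kernel_mult: "x \<in> \<AA> \<Longrightarrow> y \<in> st_carrier U \<Longrightarrow> st_mult U x y \<in> \<AA>"
  using mem_ghost_kernel_iff map_mult map_closed V.ghost_mult U.mult_closed by simp

lemma map_e_mult_ghost_kernel: "x \<in> \<AA> \<Longrightarrow> \<alpha> (st_mult U (st_e U) x) = \<alpha> x"
  using map_e_mult mem_ghost_kernel_iff V.e_mult_of_ghost by simp

lemma zero_kernel_subset_ghost_kernel: "x \<in> st_carrier U \<Longrightarrow> \<alpha> x = st_zero V \<Longrightarrow> x \<in> \<AA>"
  using mem_ghost_kernel_iff V.zero_ghost by simp

abbreviation R where "R \<equiv> kernel_rel U \<AA> \<alpha>"

lemma kernel_rel_te_relation: "te_relation U R"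
proof (rule U.kernel_rel_te_relation)
  show "\<AA> \<subseteq> st_carrier U" "ghosts U \<subseteq> \<AA>"
    by (fact ghost_kernel_subset ghosts_subset_ghost_kernel)+
  show "st_mult U x y \<in> \<AA>" if "x \<in> \<AA>" "y \<in> st_carrier U" for x y
    using that by (fact ghost_kernel_mult)
  show "\<alpha> (st_mult U x y) = \<alpha> (st_mult U x' y')"
    if "x \<in> st_carrier U" "x' \<in> st_carrier U" "y \<in> st_carrier U" "y' \<in> st_carrier U"
      "\<alpha> x = \<alpha> x'" "\<alpha> y = \<alpha> y'" for x x' y y'
    using that by (simp add: map_mult)
next
  fix x
  assume x: "x \<in> st_carrier U" and "\<alpha> (st_mult U (st_e U) x) = \<alpha> (st_zero U)"
  then have "st_mult V (st_e V) (\<alpha> x) = st_zero V"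
    by (simp add: map_e_mult map_zero)
  then have "\<alpha> x = st_zero V"
    using V.e_mult_eq_zero_iff map_closed x by blast
  then show "x \<in> \<AA> \<and> \<alpha> x = \<alpha> (st_zero U)"
    using x zero_kernel_subset_ghost_kernel map_zero by simp
next
  fix a b c
  assume abc: "a \<in> ghosts U" "b \<in> ghosts U" "c \<in> ghosts U" "st_le U a b" "st_le U b c"
    and "\<alpha> a = \<alpha> c"
  then have "st_le V (\<alpha> a) (\<alpha> b)" "st_le V (\<alpha> b) (\<alpha> a)"
    using map_mono[of a b] map_mono[of b c] by simp_all
  then show "\<alpha> a = \<alpha> b"
    using V.ghost_le_antisym map_ghost abc by blast
qed

lemma rel_E_te_relation: "te_relation U (rel_E U \<AA>)"
  unfolding rel_E_eq_kernel_rel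
proof (rule U.kernel_rel_te_relation)
  show "\<AA> \<subseteq> st_carrier U" "ghosts U \<subseteq> \<AA>"
    by (fact ghost_kernel_subset ghosts_subset_ghost_kernel)+
  show "st_mult U x y \<in> \<AA>" if "x \<in> \<AA>" "y \<in> st_carrier U" for x y
    using that by (fact ghost_kernel_mult)
  show "st_mult U (st_e U) (st_mult U x y) = st_mult U (st_e U) (st_mult U x' y')"
    if "x \<in> st_carrier U" "x' \<in> st_carrier U" "y \<in> st_carrier U" "y' \<in> st_carrier U"
      "st_mult U (st_e U) x = st_mult U (st_e U) x'" "st_mult U (st_e U) y = st_mult U (st_e U) y'"
    for x x' y y'
    using that by (simp add: U.e_mult_mult)
next
  fix x
  assume x: "x \<in> st_carrier U"
    and "st_mult U (st_e U) (st_mult U (st_e U) x) = st_mult U (st_e U) (st_zero U)"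
  then have "st_mult U (st_e U) x = st_zero U"
    using U.e_mult_ghost U.e_mult_of_ghost U.zero_ghost by simp
  then have "x = st_zero U"
    using U.e_mult_eq_zero x by blast
  then show "x \<in> \<AA> \<and> st_mult U (st_e U) x = st_mult U (st_e U) (st_zero U)"
    using ghosts_subset_ghost_kernel U.zero_ghost by blast
next
  fix a b c
  assume "a \<in> ghosts U" "b \<in> ghosts U" "c \<in> ghosts U" "st_le U a b" "st_le U b c"
    and "st_mult U (st_e U) a = st_mult U (st_e U) c"
  then show "st_mult U (st_e U) a = st_mult U (st_e U) b"
    using U.e_mult_of_ghost U.ghost_le_antisym by simp
qed

lemma rel_E_subset_kernel_rel: "rel_E U \<AA> \<subseteq> R"
proof
  fix p
  assume "p \<in> rel_E U \<AA>"
  then obtain x y where "p = (x, y)" "x \<in> st_carrier U" "y \<in> st_carrier U"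
    "x = y \<or> (x \<in> \<AA> \<and> y \<in> \<AA> \<and> st_mult U (st_e U) x = st_mult U (st_e U) y)"
    unfolding rel_E_def by blast
  moreover have "x = y \<or> (x \<in> \<AA> \<and> y \<in> \<AA> \<and> \<alpha> x = \<alpha> y)"
    using calculation(4) map_e_mult_ghost_kernel by metis
  ultimately show "p \<in> R"
    unfolding kernel_rel_def by simp
qed

sublocale UE: te_relation U "rel_E U \<AA>"
  by (fact rel_E_te_relation)

abbreviation Ubar where "Ubar \<equiv> UE.Q"

lemma kernel_rel_iff:
  "(x, y) \<in> R \<longleftrightarrow> x \<in> st_carrier U \<and> y \<in> st_carrier U \<and> (x = y \<or> (x \<in> \<AA> \<and> y \<in> \<AA> \<and> \<alpha> x = \<alpha> y))"
  unfolding kernel_rel_def by simp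

lemma kernel_rel_map_eq: "(x, y) \<in> R \<Longrightarrow> \<alpha> x = \<alpha> y"
  unfolding kernel_rel_iff by auto

lemma cls_eq_iff_rel_E:
  "x \<in> st_carrier U \<Longrightarrow> y \<in> st_carrier U \<Longrightarrow> UE.q x = UE.q y \<longleftrightarrow>
    x = y \<or> (x \<in> \<AA> \<and> y \<in> \<AA> \<and> st_mult U (st_e U) x = st_mult U (st_e U) y)"
  using UE.cls_eq_iff unfolding rel_E_def by simp

lemma cls_ghost_inj: "a \<in> ghosts U \<Longrightarrow> b \<in> ghosts U \<Longrightarrow> UE.q a = UE.q b \<longleftrightarrow> a = b"
  using cls_eq_iff_rel_E U.ghost_in_carrier U.e_mult_of_ghost by auto

lemma cls_e_mult: "x \<in> \<AA> \<Longrightarrow> UE.q x = UE.q (st_mult U (st_e U) x)"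
  using cls_eq_iff_rel_E ghost_kernel_subset ghosts_subset_ghost_kernel U.e_mult_ghost
    U.ghost_in_carrier U.e_mult_of_ghost by (metis subsetD)

lemma cls_in_ghosts_iff: "x \<in> st_carrier U \<Longrightarrow> UE.q x \<in> ghosts Ubar \<longleftrightarrow> x \<in> \<AA>"
  unfolding UE.quot_ghosts
  using cls_e_mult cls_eq_iff_rel_E U.e_mult_ghost U.ghost_in_carrier ghosts_subset_ghost_kernel
  by (smt (verit) image_iff subsetD)

lemma cls_inter_ghosts: "m \<in> ghosts U \<Longrightarrow> UE.q m \<inter> ghosts U = {m}"
  using cls_ghost_inj UE.cls_of_mem UE.self_in_cls U.ghost_in_carrier by blast

text \<open>\<open>\<gamma>\<close> evaluates \<open>\<alpha>\<close> at a ghost representative; on the classes of the ghost kernel this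
  representative is unique (\<open>cls_inter_ghosts\<close>), on other classes the value is arbitrary.\<close>
abbreviation \<gamma> :: "'a set \<Rightarrow> 'b" where
  "\<gamma> \<equiv> \<lambda>X. \<alpha> (SOME x. x \<in> X \<inter> ghosts U)"

lemma \<gamma>_cls:
  assumes x: "x \<in> \<AA>"
  shows "\<gamma> (UE.q x) = \<alpha> x"
proof -
  have m: "st_mult U (st_e U) x \<in> ghosts U"
    using x ghost_kernel_subset U.e_mult_ghost by blast
  have "UE.q x \<inter> ghosts U = {st_mult U (st_e U) x}"
    using cls_e_mult[OF x] cls_inter_ghosts[OF m] by simp
  then show ?thesis
    using map_e_mult_ghost_kernel[OF x] by simp
qed

abbreviation F where "F \<equiv> rel_F Ubar \<gamma> (st_zero V)"

lemma rel_F_cls_iff: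
  assumes x: "x \<in> st_carrier U" and y: "y \<in> st_carrier U"
  shows "(UE.q x, UE.q y) \<in> F \<longleftrightarrow> (x, y) \<in> R"
proof -
  have e_cls: "\<gamma> (st_mult Ubar (st_e Ubar) (UE.q z)) = st_mult V (st_e V) (\<alpha> z)"
    if "z \<in> st_carrier U" for z
    using that UE.quot_e UE.quot_mult U.e_closed \<gamma>_cls U.e_mult_ghost ghosts_subset_ghost_kernel
      map_e_mult by (simp add: subset_iff)
  have "(UE.q x, UE.q y) \<in> F \<longleftrightarrow> UE.q x = UE.q y \<or> (x \<in> \<AA> \<and> y \<in> \<AA> \<and> \<alpha> x = \<alpha> y) \<or>
      (\<alpha> x = st_zero V \<and> \<alpha> y = st_zero V)"
    unfolding rel_F_def using x y UE.quot_carrier cls_in_ghosts_iff \<gamma>_cls e_cls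
      V.e_mult_eq_zero_iff map_closed by auto
  also have "\<dots> \<longleftrightarrow> (x, y) \<in> R"
    using x y cls_eq_iff_rel_E map_e_mult_ghost_kernel zero_kernel_subset_ghost_kernel
    unfolding kernel_rel_iff by metis
  finally show ?thesis .
qed

lemma rel_F_eq: "F = quot_rel U (rel_E U \<AA>) R"
proof (intro set_eqI iffI)
  fix P
  assume P: "P \<in> F"
  then obtain x y where "x \<in> st_carrier U" "y \<in> st_carrier U" "P = (UE.q x, UE.q y)"
    unfolding rel_F_def UE.quot_carrier by blast
  then show "P \<in> quot_rel U (rel_E U \<AA>) R"
    using P rel_F_cls_iff unfolding quot_rel_def by blast
next
  fix P
  assume "P \<in> quot_rel U (rel_E U \<AA>) R"
  then obtain x y where "(x, y) \<in> R" "P = (UE.q x, UE.q y)"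
    unfolding quot_rel_def by blast
  then show "P \<in> F"
    using rel_F_cls_iff kernel_rel_iff by auto
qed

sublocale UF: te_relation Ubar F
  unfolding rel_F_eq
  using UE.quot_te_relation[OF kernel_rel_te_relation rel_E_subset_kernel_rel] .

abbreviation W where "W \<equiv> UF.Q"

definition \<pi> :: "'a \<Rightarrow> 'a set set" where
  "\<pi> x = UF.q (UE.q x)"

lemma cls_closed: "x \<in> st_carrier U \<Longrightarrow> UE.q x \<in> st_carrier Ubar"
  unfolding UE.quot_carrier by blast

lemma \<pi>_eq_iff: "x \<in> st_carrier U \<Longrightarrow> y \<in> st_carrier U \<Longrightarrow> \<pi> x = \<pi> y \<longleftrightarrow> (x, y) \<in> R"
  unfolding \<pi>_def using UF.cls_eq_iff cls_closed rel_F_cls_iff by simp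

lemma W_carrier: "st_carrier W = \<pi> ` st_carrier U"
  unfolding UF.quot_carrier UE.quot_carrier \<pi>_def by (simp add: image_image)

lemma W_mult: "x \<in> st_carrier U \<Longrightarrow> y \<in> st_carrier U \<Longrightarrow> st_mult W (\<pi> x) (\<pi> y) = \<pi> (st_mult U x y)"
  unfolding \<pi>_def using UF.quot_mult cls_closed UE.quot_mult by simp

lemma W_zero: "st_zero W = \<pi> (st_zero U)"
  and W_one: "st_one W = \<pi> (st_one U)"
  and W_e: "st_e W = \<pi> (st_e U)"
  unfolding \<pi>_def UF.quot_zero UE.quot_zero UF.quot_one UE.quot_one UF.quot_e UE.quot_e by simp_all

lemma W_ghosts: "ghosts W = \<pi> ` ghosts U"
  unfolding UF.quot_ghosts UE.quot_ghosts \<pi>_def by (simp add: image_image)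

lemma \<pi>_in_ghosts_iff:
  assumes x: "x \<in> st_carrier U"
  shows "\<pi> x \<in> ghosts W \<longleftrightarrow> x \<in> \<AA>"
proof
  assume "\<pi> x \<in> ghosts W"
  then obtain m where "m \<in> ghosts U" "\<pi> x = \<pi> m"
    unfolding W_ghosts by blast
  then show "x \<in> \<AA>"
    using \<pi>_eq_iff x U.ghost_in_carrier ghosts_subset_ghost_kernel unfolding kernel_rel_iff by blast
next
  assume xA: "x \<in> \<AA>"
  have m: "st_mult U (st_e U) x \<in> ghosts U"
    using U.e_mult_ghost x by blast
  then have "(x, st_mult U (st_e U) x) \<in> R"
    unfolding kernel_rel_iff using x xA ghosts_subset_ghost_kernel U.ghost_in_carrier
      map_e_mult_ghost_kernel[OF xA] by auto
  then have "\<pi> x = \<pi> (st_mult U (st_e U) x)"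
    using \<pi>_eq_iff x U.ghost_in_carrier m by blast
  then show "\<pi> x \<in> ghosts W"
    unfolding W_ghosts using m by blast
qed

lemma Ubar_le_iff: "a \<in> ghosts U \<Longrightarrow> b \<in> ghosts U \<Longrightarrow> st_le Ubar (UE.q a) (UE.q b) \<longleftrightarrow> st_le U a b"
  using UE.quot_le_cls_iff[OF U.supertropical_axioms, of id] cls_ghost_inj UE.cls_eq_iff
    U.ghost_in_carrier by auto

lemma W_le_iff:
  assumes ab: "a \<in> ghosts U" "b \<in> ghosts U"
  shows "st_le W (\<pi> a) (\<pi> b) \<longleftrightarrow> st_le V (\<alpha> a) (\<alpha> b)"
proof -
  have rel_iff: "(X, Y) \<in> F \<longleftrightarrow> \<gamma> X = \<gamma> Y" if "X \<in> ghosts Ubar" "Y \<in> ghosts Ubar" for X Y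
    using that UE.quot_ghosts rel_F_cls_iff \<gamma>_cls U.ghost_in_carrier ghosts_subset_ghost_kernel
    unfolding kernel_rel_iff by (auto simp: subset_iff)
  have ghost: "\<gamma> X \<in> ghosts V" if "X \<in> ghosts Ubar" for X
    using that UE.quot_ghosts \<gamma>_cls map_ghost ghosts_subset_ghost_kernel by (auto simp: subset_iff)
  have mono: "st_le V (\<gamma> X) (\<gamma> Y)" if "X \<in> ghosts Ubar" "Y \<in> ghosts Ubar" "st_le Ubar X Y" for X Y
    using that UE.quot_ghosts Ubar_le_iff \<gamma>_cls map_mono ghosts_subset_ghost_kernel by (auto simp: subset_iff)
  have "st_le W (\<pi> a) (\<pi> b) \<longleftrightarrow> st_le V (\<gamma> (UE.q a)) (\<gamma> (UE.q b))"
    unfolding \<pi>_def using UF.quot_le_cls_iff[OF V.supertropical_axioms rel_iff ghost mono] ab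
      UE.quot_ghosts by simp
  then show ?thesis
    using \<gamma>_cls ab ghosts_subset_ghost_kernel by (auto simp: subset_iff)
qed

definition \<mu> :: "'a set set \<Rightarrow> 'b" where
  "\<mu> Z = \<alpha> (SOME x. x \<in> st_carrier U \<and> \<pi> x = Z)"

lemma \<mu>_\<pi>: "x \<in> st_carrier U \<Longrightarrow> \<mu> (\<pi> x) = \<alpha> x"
  unfolding \<mu>_def using \<pi>_eq_iff kernel_rel_map_eq by (metis (mono_tags, lifting) someI)

lemma cls_ideal_compression: "ideal_compression U Ubar UE.q"
proof -
  have kernel: "ghost_kernel U Ubar UE.q = \<AA>"
    using cls_in_ghosts_iff ghost_kernel_subset by (auto simp: ghost_kernel_def[of U Ubar])
  have "fiber_contraction U Ubar UE.q"
    unfolding fiber_contraction_def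
    using UE.quot_map_transmission UE.quot_carrier UE.quot_ghosts cls_ghost_inj Ubar_le_iff
    by (auto simp: bij_betw_def inj_on_def)
  moreover have "inj_on UE.q (st_carrier U - \<AA>)"
    using cls_eq_iff_rel_E by (auto simp: inj_on_def)
  moreover have "UE.q ` (st_carrier U - \<AA>) = tangibles Ubar"
    unfolding tangibles_def UE.quot_carrier using cls_in_ghosts_iff by blast
  ultimately show ?thesis
    unfolding ideal_compression_def kernel bij_betw_def by blast
qed

lemma zero_kernel_subset_ghosts: "zero_kernel Ubar W UF.q \<subseteq> ghosts Ubar"
proof
  fix X
  assume "X \<in> zero_kernel Ubar W UF.q"
  then obtain x where x: "x \<in> st_carrier U" "X = UE.q x" "\<pi> x = \<pi> (st_zero U)"
    unfolding zero_kernel_def W_zero UE.quot_carrier \<pi>_def by blast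
  then have "x \<in> \<AA>"
    using \<pi>_eq_iff U.zero_closed U.zero_ghost ghosts_subset_ghost_kernel
    unfolding kernel_rel_iff by blast
  then show "X \<in> ghosts Ubar"
    using cls_in_ghosts_iff x by simp
qed

lemma cls_strict_ghost_contraction: "strict_ghost_contraction Ubar W UF.q"
proof -
  have tangible_part: "st_carrier Ubar - (ghosts Ubar \<union> zero_kernel Ubar W UF.q) =
      UE.q ` (st_carrier U - \<AA>)"
    using zero_kernel_subset_ghosts cls_in_ghosts_iff unfolding UE.quot_carrier by blast
  have "inj_on UF.q (UE.q ` (st_carrier U - \<AA>))"
    using \<pi>_eq_iff unfolding \<pi>_def kernel_rel_iff by (auto simp: inj_on_def)
  moreover have "UF.q ` UE.q ` (st_carrier U - \<AA>) = tangibles W"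
    unfolding tangibles_def W_carrier using \<pi>_in_ghosts_iff by (auto simp: \<pi>_def)
  ultimately show ?thesis
    unfolding strict_ghost_contraction_def ghost_contraction_def bij_betw_def tangible_part
    using UF.quot_map_transmission UF.quot_ghosts zero_kernel_subset_ghosts by simp
qed

lemma \<mu>_transmission: "transmission W V \<mu>"
  unfolding transmission_def
proof (intro conjI ballI impI)
  show "\<mu> ` st_carrier W \<subseteq> st_carrier V"
    unfolding W_carrier using \<mu>_\<pi> map_closed by auto
  show "\<mu> (st_zero W) = st_zero V" "\<mu> (st_one W) = st_one V" "\<mu> (st_e W) = st_e V"
    using W_zero W_one W_e \<mu>_\<pi> U.zero_closed U.one_closed U.e_closed map_zero map_one map_e
    by simp_all
next
  fix X Y
  assume "X \<in> st_carrier W" "Y \<in> st_carrier W"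
  then obtain x y where "x \<in> st_carrier U" "y \<in> st_carrier U" "X = \<pi> x" "Y = \<pi> y"
    unfolding W_carrier by blast
  then show "\<mu> (st_mult W X Y) = st_mult V (\<mu> X) (\<mu> Y)"
    using W_mult \<mu>_\<pi> U.mult_closed map_mult by simp
next
  fix X Y
  assume "X \<in> ghosts W" "Y \<in> ghosts W" "st_le W X Y"
  then obtain a b where "a \<in> ghosts U" "b \<in> ghosts U" "X = \<pi> a" "Y = \<pi> b" "st_le W (\<pi> a) (\<pi> b)"
    unfolding W_ghosts by blast
  then show "st_le V (\<mu> X) (\<mu> Y)"
    using W_le_iff \<mu>_\<pi> U.ghost_in_carrier by simp
qed

lemma \<mu>_fiber_contraction: "fiber_contraction W V \<mu>"
proof -
  have "\<mu> ` st_carrier W = st_carrier V"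
    unfolding W_carrier surjective[symmetric] image_image using \<mu>_\<pi> by simp
  moreover have "\<mu> ` ghosts W = ghosts V"
    unfolding W_ghosts ghosts_eq_image image_image using \<mu>_\<pi> U.ghost_in_carrier by simp
  moreover have "inj_on \<mu> (ghosts W)"
    unfolding W_ghosts using \<mu>_\<pi> \<pi>_eq_iff U.ghost_in_carrier ghosts_subset_ghost_kernel
    unfolding kernel_rel_iff by (auto simp: inj_on_def subset_iff)
  moreover have "st_le W X Y" if "X \<in> ghosts W" "Y \<in> ghosts W" "st_le V (\<mu> X) (\<mu> Y)" for X Y
    using that W_le_iff \<mu>_\<pi> U.ghost_in_carrier unfolding W_ghosts by auto
  ultimately show ?thesis
    unfolding fiber_contraction_def bij_betw_def using \<mu>_transmission by blast
qed

lemma \<mu>_tangible: "tangible_transmission W V \<mu>"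
  unfolding tangible_transmission_def
proof (intro conjI \<mu>_transmission subsetI)
  fix Z
  assume "Z \<in> \<mu> ` tangibles W"
  then obtain x where "x \<in> st_carrier U" "\<pi> x \<notin> ghosts W" "Z = \<alpha> x"
    unfolding tangibles_def W_carrier using \<mu>_\<pi> by auto
  then show "Z \<in> tangibles V \<union> {st_zero V}"
    unfolding tangibles_def using \<pi>_in_ghosts_iff mem_ghost_kernel_iff map_closed by simp
qed

theorem canonical_factorization:
  "is_factorization U V \<alpha> Ubar W (quot_map U (rel_E U \<AA>)) (quot_map Ubar F) \<mu>"
  unfolding is_factorization_def quot_map_def
  using supertropical.supertropical_monoid[OF UE.quot_supertropical]
    supertropical.supertropical_monoid[OF UF.quot_supertropical]
    cls_ideal_compression cls_strict_ghost_contraction \<mu>_tangible \<mu>_fiber_contraction \<mu>_\<pi>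
  unfolding \<pi>_def by simp

end

section \<open>Uniqueness\<close>

locale factorization = surjective_transmission U V \<alpha>
  for U :: "('a, 'm) stm_scheme" and V :: "('b, 'n) stm_scheme" and \<alpha> +
  fixes U1 :: "'c stm" and W1 :: "'d stm"
    and lam :: "'a \<Rightarrow> 'c" and bet :: "'c \<Rightarrow> 'd" and mu :: "'d \<Rightarrow> 'b"
  assumes factorization: "is_factorization U V \<alpha> U1 W1 lam bet mu"
begin

sublocale U1: supertropical U1
  using factorization supertropicalI unfolding is_factorization_def by blast

sublocale W1: supertropical W1
  using factorization supertropicalI unfolding is_factorization_def by blast

lemma factor_eq: "x \<in> st_carrier U \<Longrightarrow> \<alpha> x = mu (bet (lam x))"
  using factorization unfolding is_factorization_def by blast

lemma lam_transmission: "transmission U U1 lam"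
  and lam_surj: "lam ` st_carrier U = st_carrier U1"
  and lam_ghosts_bij: "bij_betw lam (ghosts U) (ghosts U1)"
  and lam_reflects_le: "a \<in> ghosts U \<Longrightarrow> b \<in> ghosts U \<Longrightarrow> st_le U1 (lam a) (lam b) \<Longrightarrow> st_le U a b"
  and lam_tangibles_bij: "bij_betw lam (st_carrier U - ghost_kernel U U1 lam) (tangibles U1)"
  using factorization
  unfolding is_factorization_def ideal_compression_def fiber_contraction_def by blast+

lemma bet_transmission: "transmission U1 W1 bet"
  and bet_ghosts: "bet ` ghosts U1 = ghosts W1"
  and bet_tangibles_bij:
    "bij_betw bet (st_carrier U1 - (ghosts U1 \<union> zero_kernel U1 W1 bet)) (tangibles W1)"
  and bet_zero_kernel: "zero_kernel U1 W1 bet \<subseteq> ghosts U1"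
  using factorization
  unfolding is_factorization_def strict_ghost_contraction_def ghost_contraction_def by blast+

lemma mu_transmission: "transmission W1 V mu"
  and mu_tangible: "mu ` tangibles W1 \<subseteq> tangibles V \<union> {st_zero V}"
  and mu_ghosts_bij: "bij_betw mu (ghosts W1) (ghosts V)"
  and mu_reflects_le: "a \<in> ghosts W1 \<Longrightarrow> b \<in> ghosts W1 \<Longrightarrow> st_le V (mu a) (mu b) \<Longrightarrow> st_le W1 a b"
  using factorization
  unfolding is_factorization_def fiber_contraction_def tangible_transmission_def by blast+

lemma lam_closed: "x \<in> st_carrier U \<Longrightarrow> lam x \<in> st_carrier U1"
  using lam_transmission unfolding transmission_def by blast

lemma lam_e_mult: "x \<in> st_carrier U \<Longrightarrow> lam (st_mult U (st_e U) x) = st_mult U1 (st_e U1) (lam x)"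
  using lam_transmission U.e_closed unfolding transmission_def by simp

lemma bet_lam_transmission: "transmission U W1 (\<lambda>x. bet (lam x))"
  using transmission_comp[OF U.supertropical_axioms lam_transmission bet_transmission] .

lemma bet_nonghost_tangible: "u \<in> st_carrier U1 \<Longrightarrow> u \<notin> ghosts U1 \<Longrightarrow> bet u \<in> tangibles W1"
  using bet_tangibles_bij bet_zero_kernel unfolding bij_betw_def by blast

lemma lam_in_ghosts_iff:
  assumes x: "x \<in> st_carrier U"
  shows "lam x \<in> ghosts U1 \<longleftrightarrow> x \<in> \<AA>"
proof
  assume "lam x \<in> ghosts U1"
  then show "x \<in> \<AA>"
    using x factor_eq mem_ghost_kernel_iff U1.transmission_ghost[OF bet_transmission]
      W1.transmission_ghost[OF mu_transmission] by simp
next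
  assume xA: "x \<in> \<AA>"
  show "lam x \<in> ghosts U1"
  proof (rule ccontr)
    assume "lam x \<notin> ghosts U1"
    then have "bet (lam x) \<in> tangibles W1"
      using bet_nonghost_tangible lam_closed x by blast
    then have w: "bet (lam x) \<in> st_carrier W1" "bet (lam x) \<notin> ghosts W1"
      and "mu (bet (lam x)) = st_zero V"
      using mu_tangible factor_eq x xA mem_ghost_kernel_iff unfolding tangibles_def by auto
    then have "mu (st_mult W1 (st_e W1) (bet (lam x))) = mu (st_zero W1)"
      using mu_transmission W1.e_closed V.e_mult_of_ghost V.zero_ghost
      unfolding transmission_def by auto
    then have "st_mult W1 (st_e W1) (bet (lam x)) = st_zero W1"
      using mu_ghosts_bij W1.e_mult_ghost[OF w(1)] W1.zero_ghost
      unfolding bij_betw_def inj_on_def by blast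
    then have "bet (lam x) = st_zero W1"
      using W1.e_mult_eq_zero w(1) by blast
    then show False
      using w(2) W1.zero_ghost by simp
  qed
qed

lemma ghost_kernel_lam: "ghost_kernel U U1 lam = \<AA>"
  using lam_in_ghosts_iff ghost_kernel_subset by (auto simp: ghost_kernel_def[of U U1])

lemma lam_eq_iff:
  assumes x: "x \<in> st_carrier U" and y: "y \<in> st_carrier U"
  shows "lam x = lam y \<longleftrightarrow>
    x = y \<or> (x \<in> \<AA> \<and> y \<in> \<AA> \<and> st_mult U (st_e U) x = st_mult U (st_e U) y)"
proof
  assume eq: "lam x = lam y"
  show "x = y \<or> (x \<in> \<AA> \<and> y \<in> \<AA> \<and> st_mult U (st_e U) x = st_mult U (st_e U) y)"
  proof (cases "x \<in> \<AA>")
    case True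
    then have "y \<in> \<AA>"
      using lam_in_ghosts_iff x y eq by metis
    have "lam (st_mult U (st_e U) x) = lam (st_mult U (st_e U) y)"
      using lam_e_mult x y eq by simp
    then have "st_mult U (st_e U) x = st_mult U (st_e U) y"
      using lam_ghosts_bij U.e_mult_ghost x y unfolding bij_betw_def inj_on_def by blast
    then show ?thesis
      using True \<open>y \<in> \<AA>\<close> by blast
  next
    case False
    then have "y \<notin> \<AA>"
      using lam_in_ghosts_iff x y eq by metis
    then show ?thesis
      using lam_tangibles_bij x y False eq
      unfolding ghost_kernel_lam bij_betw_def inj_on_def by blast
  qed
next
  assume "x = y \<or> (x \<in> \<AA> \<and> y \<in> \<AA> \<and> st_mult U (st_e U) x = st_mult U (st_e U) y)"
  then show "lam x = lam y"
    using lam_e_mult lam_in_ghosts_iff U1.e_mult_of_ghost x y by metis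
qed

lemma bet_lam_in_ghosts_iff: "x \<in> st_carrier U \<Longrightarrow> bet (lam x) \<in> ghosts W1 \<longleftrightarrow> x \<in> \<AA>"
  using lam_in_ghosts_iff bet_nonghost_tangible lam_closed
    U1.transmission_ghost[OF bet_transmission] unfolding tangibles_def by blast

lemma bet_lam_eq_iff:
  assumes x: "x \<in> st_carrier U" and y: "y \<in> st_carrier U"
  shows "bet (lam x) = bet (lam y) \<longleftrightarrow> (x, y) \<in> R"
proof
  assume eq: "bet (lam x) = bet (lam y)"
  show "(x, y) \<in> R"
  proof (cases "x \<in> \<AA>")
    case True
    then show ?thesis
      using bet_lam_in_ghosts_iff x y eq factor_eq unfolding kernel_rel_iff by metis
  next
    case False
    then have "y \<notin> \<AA>"
      using bet_lam_in_ghosts_iff x y eq by metis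
    then have "lam x = lam y"
      using bet_tangibles_bij bet_zero_kernel lam_closed lam_in_ghosts_iff x y False eq
      unfolding bij_betw_def inj_on_def by blast
    then show ?thesis
      using lam_eq_iff x y False unfolding kernel_rel_iff by blast
  qed
next
  assume "(x, y) \<in> R"
  then consider "x = y" | "x \<in> \<AA>" "y \<in> \<AA>" "\<alpha> x = \<alpha> y"
    unfolding kernel_rel_iff by blast
  then show "bet (lam x) = bet (lam y)"
  proof cases
    case 2
    then have "mu (bet (lam x)) = mu (bet (lam y))"
      using factor_eq x y by simp
    then show ?thesis
      using 2 bet_lam_in_ghosts_iff x y mu_ghosts_bij unfolding bij_betw_def inj_on_def by blast
  qed simp
qed

lemma bet_lam_surj: "(\<lambda>x. bet (lam x)) ` st_carrier U = st_carrier W1"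
proof -
  have "bet ` st_carrier U1 \<subseteq> st_carrier W1"
    using bet_transmission unfolding transmission_def by blast
  moreover have "w \<in> bet ` st_carrier U1" if w: "w \<in> st_carrier W1" for w
  proof (cases "w \<in> ghosts W1")
    case True
    then show ?thesis
      using bet_ghosts U1.ghost_in_carrier by blast
  next
    case False
    then have "w \<in> tangibles W1"
      using w unfolding tangibles_def by blast
    then show ?thesis
      using bet_tangibles_bij unfolding bij_betw_def by blast
  qed
  ultimately have "bet ` st_carrier U1 = st_carrier W1"
    by blast
  then show ?thesis
    using lam_surj by (metis image_image)
qed

lemma lam_le_iff:
  assumes "x \<in> st_carrier U" "y \<in> st_carrier U" "lam x \<in> ghosts U1" "lam y \<in> ghosts U1"
  shows "st_le U1 (lam x) (lam y) \<longleftrightarrow> st_le U (st_mult U (st_e U) x) (st_mult U (st_e U) y)"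
proof -
  have "lam x = lam (st_mult U (st_e U) x)" "lam y = lam (st_mult U (st_e U) y)"
    using assms lam_e_mult U1.e_mult_of_ghost by simp_all
  then show ?thesis
    using assms lam_reflects_le lam_transmission U.e_mult_ghost
    unfolding transmission_def by metis
qed

lemma bet_lam_le_iff:
  assumes "x \<in> st_carrier U" "y \<in> st_carrier U" "bet (lam x) \<in> ghosts W1" "bet (lam y) \<in> ghosts W1"
  shows "st_le W1 (bet (lam x)) (bet (lam y)) \<longleftrightarrow> st_le V (\<alpha> x) (\<alpha> y)"
  using assms mu_transmission mu_reflects_le factor_eq unfolding transmission_def by metis

end

lemma (in surjective_transmission) factorization_unique:
  fixes U1 :: "'c stm" and W1 :: "'d stm" and U2 :: "'e stm" and W2 :: "'f stm"
  assumes fact1: "is_factorization U V \<alpha> U1 W1 lam bet mu"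
    and fact2: "is_factorization U V \<alpha> U2 W2 lam' bet' mu'"
  shows "\<exists>\<rho> \<sigma>. stm_iso U1 U2 \<rho> \<and> stm_iso W1 W2 \<sigma> \<and>
    (\<forall>x\<in>st_carrier U. \<rho> (lam x) = lam' x) \<and>
    (\<forall>x\<in>st_carrier U. \<sigma> (bet (lam x)) = bet' (lam' x))"
proof -
  interpret F1: factorization U V \<alpha> U1 W1 lam bet mu
    using fact1 by unfold_locales
  interpret F2: factorization U V \<alpha> U2 W2 lam' bet' mu'
    using fact2 by unfold_locales
  have lam_kernel: "lam x = lam y \<longleftrightarrow> lam' x = lam' y"
    if "x \<in> st_carrier U" "y \<in> st_carrier U" for x y
    using that F1.lam_eq_iff F2.lam_eq_iff by simp
  have lam_order: "st_le U1 (lam x) (lam y) \<longleftrightarrow> st_le U2 (lam' x) (lam' y)"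
    if "x \<in> st_carrier U" "y \<in> st_carrier U" "lam x \<in> ghosts U1" "lam y \<in> ghosts U1" for x y
    using that F1.lam_le_iff F2.lam_le_iff F1.lam_in_ghosts_iff F2.lam_in_ghosts_iff by simp
  have bet_lam_kernel: "bet (lam x) = bet (lam y) \<longleftrightarrow> bet' (lam' x) = bet' (lam' y)"
    if "x \<in> st_carrier U" "y \<in> st_carrier U" for x y
    using that F1.bet_lam_eq_iff F2.bet_lam_eq_iff by simp
  have bet_lam_order:
    "st_le W1 (bet (lam x)) (bet (lam y)) \<longleftrightarrow> st_le W2 (bet' (lam' x)) (bet' (lam' y))"
    if "x \<in> st_carrier U" "y \<in> st_carrier U" "bet (lam x) \<in> ghosts W1" "bet (lam y) \<in> ghosts W1"
    for x y
    using that F1.bet_lam_le_iff F2.bet_lam_le_iff F1.bet_lam_in_ghosts_iff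
      F2.bet_lam_in_ghosts_iff by simp
  show ?thesis
    using induced_stm_iso[OF U.supertropical_axioms F1.U1.supertropical_axioms
        F2.U1.supertropical_axioms F1.lam_transmission F1.lam_surj F2.lam_transmission F2.lam_surj
        lam_kernel lam_order]
      induced_stm_iso[OF U.supertropical_axioms F1.W1.supertropical_axioms
        F2.W1.supertropical_axioms F1.bet_lam_transmission F1.bet_lam_surj
        F2.bet_lam_transmission F2.bet_lam_surj bet_lam_kernel bet_lam_order]
    by blast
qed

lemma (in surjective_transmission) factorization_essentially_unique:
  fixes U1 :: "'c stm" and W1 :: "'d stm" and U2 :: "'e stm" and W2 :: "'f stm"
  assumes fact1: "is_factorization U V \<alpha> U1 W1 lam bet mu"
    and fact2: "is_factorization U V \<alpha> U2 W2 lam' bet' mu'"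
  shows "\<exists>\<rho> \<sigma>. stm_iso U1 U2 \<rho> \<and> stm_iso W1 W2 \<sigma> \<and>
    (\<forall>m\<in>ghosts U. \<rho> (lam m) = lam' m) \<and>
    (\<forall>y\<in>ghosts W1. mu' (\<sigma> y) = mu y) \<and>
    (\<forall>x\<in>st_carrier U. lam' x = \<rho> (lam x)) \<and>
    (\<forall>y\<in>st_carrier W2. mu' y = mu (inv_into (st_carrier W1) \<sigma> y)) \<and>
    (\<forall>u\<in>st_carrier U2. bet' u = \<sigma> (bet (inv_into (st_carrier U1) \<rho> u)))"
proof -
  interpret F1: factorization U V \<alpha> U1 W1 lam bet mu
    using fact1 by unfold_locales
  interpret F2: factorization U V \<alpha> U2 W2 lam' bet' mu'
    using fact2 by unfold_locales
  obtain \<rho> \<sigma> where iso: "stm_iso U1 U2 \<rho>" "stm_iso W1 W2 \<sigma>"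
    and \<rho>: "\<forall>x\<in>st_carrier U. \<rho> (lam x) = lam' x"
    and \<sigma>: "\<forall>x\<in>st_carrier U. \<sigma> (bet (lam x)) = bet' (lam' x)"
    using factorization_unique[OF fact1 fact2] by blast
  have inv_\<rho>: "inv_into (st_carrier U1) \<rho> (lam' x) = lam x" if "x \<in> st_carrier U" for x
    using iso(1) \<rho> that F1.lam_closed unfolding stm_iso_def bij_betw_def by (metis inv_into_f_f)
  have inv_\<sigma>: "inv_into (st_carrier W1) \<sigma> (bet' (lam' x)) = bet (lam x)" if "x \<in> st_carrier U" for x
    using iso(2) \<sigma> that F1.bet_lam_surj unfolding stm_iso_def bij_betw_def
    by (metis image_eqI inv_into_f_f)
  have "\<forall>y\<in>st_carrier W1. mu' (\<sigma> y) = mu y"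
    using \<sigma> F1.factor_eq F2.factor_eq unfolding F1.bet_lam_surj[symmetric] by auto
  moreover have "\<forall>y\<in>st_carrier W2. mu' y = mu (inv_into (st_carrier W1) \<sigma> y)"
    using inv_\<sigma> F1.factor_eq F2.factor_eq unfolding F2.bet_lam_surj[symmetric] by auto
  moreover have "\<forall>u\<in>st_carrier U2. bet' u = \<sigma> (bet (inv_into (st_carrier U1) \<rho> u))"
    using inv_\<rho> \<sigma> unfolding F2.lam_surj[symmetric] by auto
  ultimately show ?thesis
    using iso \<rho> U.ghost_in_carrier F1.W1.ghost_in_carrier by metis
qed

theorem theorem2p8:
  fixes U :: "'a stm" and V :: "'b stm" and \<alpha> :: "'a \<Rightarrow> 'b"
  assumes "supertropical_monoid U" and "supertropical_monoid V"
    and "transmission U V \<alpha>" and "\<alpha> ` st_carrier U = st_carrier V"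
  shows
    \<comment> \<open>(i) existence\<close>
    "(\<exists>(U1 :: 'a set stm) (W1 :: 'a set set stm) lam bet mu.
        is_factorization U V \<alpha> U1 W1 lam bet mu)
     \<and>
     \<comment> \<open>(ii) essential uniqueness\<close>
     (\<forall>(U1 :: 'c stm) (W1 :: 'd stm) lam bet mu (U2 :: 'e stm) (W2 :: 'f stm) lam' bet' mu'.
        is_factorization U V \<alpha> U1 W1 lam bet mu \<and> is_factorization U V \<alpha> U2 W2 lam' bet' mu' \<longrightarrow>
        (\<exists>\<rho> \<sigma>. stm_iso U1 U2 \<rho> \<and> stm_iso W1 W2 \<sigma> \<and>
           (\<forall>m\<in>ghosts U. \<rho> (lam m) = lam' m) \<and>
           (\<forall>y\<in>ghosts W1. mu' (\<sigma> y) = mu y) \<and>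
           (\<forall>x\<in>st_carrier U. lam' x = \<rho> (lam x)) \<and>
           (\<forall>y\<in>st_carrier W2. mu' y = mu (inv_into (st_carrier W1) \<sigma> y)) \<and>
           (\<forall>u\<in>st_carrier U2. bet' u = \<sigma> (bet (inv_into (st_carrier U1) \<rho> u)))))
     \<and>
     \<comment> \<open>(iii) the canonical choice\<close>
     (let A = ghost_kernel U V \<alpha>;
          E = rel_E U A;
          Ub = quot_stm U E;
          g = (\<lambda>X. \<alpha> (SOME x. x \<in> X \<inter> ghosts U));
          F = rel_F Ub g (st_zero V);
          W = quot_stm Ub F
      in \<exists>mu. is_factorization U V \<alpha> Ub W (quot_map U E) (quot_map Ub F) mu)"
proof -
  interpret surjective_transmission U V \<alpha>
    using assms by (intro surjective_transmission.intro surjective_transmission_axioms.intro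
        supertropicalI)
  show ?thesis
    unfolding Let_def using canonical_factorization factorization_essentially_unique by blast
qed

end
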